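(* Let $W$ be a continuous real random variable with $\mathbb{E}[W]=0$, $\mathrm{Var}[W]=1$, cdf $F_W$ with a density $f_W$ defined (positive) on all of $\mathbb{R}$, inverse cdf $F_W^{-1}$ with $F_W^{-1}(0)=-\infty$, $F_W^{-1}(1)=+\infty$. Let $\mu_1,\mu_2\in\mathbb{R}$, $\sigma_1,\sigma_2>0$, not both $\mu_1=\mu_2$ and $\sigma_1=\sigma_2$, and define $h:(0,1)\to\mathbb{R}$ by $$h(u)=e^{\mu_1+\sigma_1F_W^{-1}(u)}-e^{\mu_2+\sigma_2F_W^{-1}(u)},$$ with $y^{\min}=\inf_{u\in(0,1)}h(u)$ and $y^{\max}=\sup_{u\in(0,1)}h(u)$. For $\sigma_1\ne\sigma_2$ let $$c^{\star}=F_W\!\left(\frac{\mu_2-\mu_1}{\sigma_1-\sigma_2}\right),\qquad u^{\star}=F_W\!\left(\frac{\log(\sigma_1/\sigma_2)+\mu_1-\mu_2}{\sigma_2-\sigma_1}\right),\qquad y^{\star}=h(u^{\star}).$$ Then: 1. If $\sigma_1=\sigma_2$ and $\mu_1>\mu_2$: $y^{\min}=0$, $y^{\max}=+\infty$, and $h$ is non-decreasing. 2. If $\sigma_1=\sigma_2$ and $\mu_2>\mu_1$: $y^{\min}=-\infty$, $y^{\max}=0$, and $h$ is non-increasing. 3. If $\sigma_1>\sigma_2$: $y^{\min}=y^{\star}<0$, $y^{\max}=+\infty$, and $h$ has a non-decreasing upper tail with threshold $c^{\star}$. 4. If $\sigma_1<\sigma_2$: $y^{\min}=-\infty$, $y^{\max}=y^{\star}>0$,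 and $h$ has a non-increasing upper tail with threshold $c^{\star}$.
   Context: For $f:(0,1)\to\mathbb{R}$: $f$ has a non-decreasing upper tail if there exists $x'\in(0,1)$ with $f(x)\le f(x')$ for all $x<x'$ and $f(x_1)\le f(x_2)$ for all $x'\le x_1\le x_2$; its threshold is the infimum of the set of all such $x'$. $f$ has a non-increasing upper tail if there exists $x'\in(0,1)$ with $f(x)\ge f(x')$ for all $x<x'$ and $f(x_1)\ge f(x_2)$ for all $x'\le x_1\le x_2$; its threshold is the infimum of the set of all such $x'$. (In the paper's setting, $h(U)$ with $U$ uniform on $[0,1]$ is the distribution of $R_1-R_2$ for comonotonic $R_i$ with $\log R_i=\mu_i+\sigma_iW$.) *)

theory Defs
  imports "HOL-Probability.Probability"
begin

text \<open>Generalized inverse (quantile function) of a cdf F; on (0,1) it is the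
  ordinary inverse when F is a continuous strictly increasing bijection onto (0,1).\<close>
definition quantile :: "(real \<Rightarrow> real) \<Rightarrow> real \<Rightarrow> real" where
  "quantile F u = Inf {x. u \<le> F x}"

definition nondec_tail_at :: "(real \<Rightarrow> real) \<Rightarrow> real \<Rightarrow> bool" where
  "nondec_tail_at f x' \<longleftrightarrow> x' \<in> {0<..<1} \<and>
     (\<forall>x\<in>{0<..<1}. x < x' \<longrightarrow> f x \<le> f x') \<and>
     (\<forall>x1\<in>{0<..<1}. \<forall>x2\<in>{0<..<1}. x' \<le> x1 \<and> x1 \<le> x2 \<longrightarrow> f x1 \<le> f x2)"

definition has_nondec_upper_tail :: "(real \<Rightarrow> real) \<Rightarrow> bool" where
  "has_nondec_upper_tail f \<longleftrightarrow> (\<exists>x'. nondec_tail_at f x')"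

definition nondec_tail_threshold :: "(real \<Rightarrow> real) \<Rightarrow> real" where
  "nondec_tail_threshold f = Inf {x'. nondec_tail_at f x'}"

definition noninc_tail_at :: "(real \<Rightarrow> real) \<Rightarrow> real \<Rightarrow> bool" where
  "noninc_tail_at f x' \<longleftrightarrow> x' \<in> {0<..<1} \<and>
     (\<forall>x\<in>{0<..<1}. x < x' \<longrightarrow> f x \<ge> f x') \<and>
     (\<forall>x1\<in>{0<..<1}. \<forall>x2\<in>{0<..<1}. x' \<le> x1 \<and> x1 \<le> x2 \<longrightarrow> f x1 \<ge> f x2)"

definition has_noninc_upper_tail :: "(real \<Rightarrow> real) \<Rightarrow> bool" where
  "has_noninc_upper_tail f \<longleftrightarrow> (\<exists>x'. noninc_tail_at f x')"

definition noninc_tail_threshold :: "(real \<Rightarrow> real) \<Rightarrow> real" where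
  "noninc_tail_threshold f = Inf {x'. noninc_tail_at f x'}"

end

theory Submission
  imports Defs "HOL-Real_Asymp.Real_Asymp"
begin

(* A positive density makes the cdf F a strictly increasing continuous bijection from the reals
   onto (0,1) with inverse quantile F, so h (F y) = e^(mu1 + sigma1 y) - e^(mu2 + sigma2 y) =: g y
   and every claim about h on (0,1) is a claim about g on the real line.
   For sigma1 = sigma2, g is a positive multiple of e^(sigma1 y). For sigma1 > sigma2, g decreases
   and then increases around its single critical point, is negative exactly left of its zero and
   tends to 0 at -infinity, so no point left of the zero starts a non-decreasing tail.
   Cases 2 and 4 are cases 1 and 3 for -h, which exchanges the two exponentials. *)

lemma distr_eq_density_if_distributed:
  assumes "distributed M lborel W f"
  shows "distr M borel W = density lborel f"
proof -
  have "distr M borel W = distr M lborel W"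
    by (rule distr_cong) auto
  then show ?thesis
    using assms by (simp add: distributed_def)
qed

lemma isCont_cdf_density:
  fixes f :: "real \<Rightarrow> ennreal"
  assumes "real_distribution (density lborel f)" and "f \<in> borel_measurable lborel"
  shows "isCont (cdf (density lborel f)) x"
proof -
  interpret real_distribution "density lborel f" by (rule assms(1))
  have "AE t in lborel. t \<notin> {x}"
    by (rule AE_not_in[OF countable_imp_null_set_lborel]) simp
  then have "AE t in lborel. t \<in> {x} \<longrightarrow> f t = 0"
    by eventually_elim simp
  then have "{x} \<in> null_sets (density lborel f)"
    using assms(2) by (simp add: null_sets_density_iff)
  then show ?thesis
    by (simp add: isCont_cdf measure_eq_0_null_sets)
qed

lemma strict_mono_cdf_pos_density:
  fixes f :: "real \<Rightarrow> real"
  assumes "real_distribution (density lborel (\<lambda>x. ennreal (f x)))"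
    and "(\<lambda>x. ennreal (f x)) \<in> borel_measurable lborel" and "\<And>x. f x > 0"
  shows "strict_mono (cdf (density lborel (\<lambda>x. ennreal (f x))))"
proof (rule strict_monoI)
  let ?N = "density lborel (\<lambda>x. ennreal (f x))"
  interpret real_distribution ?N by (rule assms(1))
  fix x y :: real assume "x < y"
  have "ennreal (f t) \<noteq> 0" for t
    using assms(3)[of t] by simp
  then have "{t. ennreal (f t) * indicator {x<..y} t \<noteq> 0} = {x<..y}"
    by (auto simp: indicator_def)
  then have "(\<integral>\<^sup>+ t. ennreal (f t) * indicator {x<..y} t \<partial>lborel) \<noteq> 0"
    using assms(2) \<open>x < y\<close> by (subst nn_integral_0_iff) auto
  then have "emeasure ?N {x<..y} \<noteq> 0"
    using assms(2) by (simp add: emeasure_density)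
  then have "measure ?N {x<..y} > 0"
    by (simp add: emeasure_eq_measure zero_less_measure_iff)
  then show "cdf ?N x < cdf ?N y"
    using cdf_diff_eq[OF \<open>x < y\<close>] by simp
qed

lemma range_cdf_eq_unit_interval:
  assumes "real_distribution N" and mono: "strict_mono (cdf N)" and cont: "\<And>x. isCont (cdf N) x"
  shows "range (cdf N) = {0<..<1}"
proof (intro subset_antisym subsetI)
  interpret real_distribution N by (rule assms(1))
  fix u assume "u \<in> range (cdf N)"
  then obtain x where x: "u = cdf N x" by blast
  have "0 \<le> cdf N (x - 1)" "cdf N (x - 1) < cdf N x" "cdf N x < cdf N (x + 1)" "cdf N (x + 1) \<le> 1"
    using mono by (auto simp: cdf_nonneg cdf_bounded_prob strict_mono_less)
  then show "u \<in> {0<..<1}"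
    using x by simp
next
  interpret real_distribution N by (rule assms(1))
  fix u :: real assume "u \<in> {0<..<1}"
  then have "eventually (\<lambda>x. cdf N x < u) at_bot" "eventually (\<lambda>x. u < cdf N x) at_top"
    using order_tendstoD[OF cdf_lim_at_bot] order_tendstoD[OF cdf_lim_at_top_prob] by auto
  then obtain a b where ab: "cdf N a < u" "u < cdf N b"
    by (auto simp: eventually_at_bot_linorder eventually_at_top_linorder)
  then have "a \<le> b"
    using mono by (metis less_imp_le order.strict_trans strict_mono_less)
  then obtain x where "cdf N x = u"
    using IVT[of "cdf N" a u b] ab cont by fastforce
  then show "u \<in> range (cdf N)"
    by blast
qed

lemma cdf_distributed_pos_density:
  fixes f :: "real \<Rightarrow> real"
  assumes "prob_space M" and dens: "distributed M lborel W (\<lambda>x. ennreal (f x))"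
    and "\<And>x. f x > 0"
  shows "strict_mono (cdf (distr M borel W))" and "range (cdf (distr M borel W)) = {0<..<1}"
proof -
  have f_meas: "(\<lambda>x. ennreal (f x)) \<in> borel_measurable lborel"
    using dens by (simp add: distributed_def)
  have "real_distribution (distr M borel W)"
    using dens by (intro prob_space.real_distribution_distr[OF assms(1)]) (simp add: distributed_def)
  then have N: "real_distribution (density lborel (\<lambda>x. ennreal (f x)))"
    by (simp add: distr_eq_density_if_distributed[OF dens])
  show "strict_mono (cdf (distr M borel W))"
    using strict_mono_cdf_pos_density[OF N f_meas assms(3)]
    by (simp add: distr_eq_density_if_distributed[OF dens])
  with range_cdf_eq_unit_interval[OF N] isCont_cdf_density[OF N f_meas]
  show "range (cdf (distr M borel W)) = {0<..<1}"
    by (simp add: distr_eq_density_if_distributed[OF dens])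
qed

lemma quantile_strict_mono:
  assumes "strict_mono F"
  shows "quantile F (F y) = y"
proof -
  have "{x. F y \<le> F x} = {y..}"
    using assms by (auto simp: strict_mono_less_eq)
  then show ?thesis
    by (simp add: quantile_def)
qed

definition exp_affine_diff :: "real \<Rightarrow> real \<Rightarrow> real \<Rightarrow> real \<Rightarrow> real \<Rightarrow> real" where
  "exp_affine_diff a1 s1 a2 s2 y = exp (a1 + s1 * y) - exp (a2 + s2 * y)"

definition exp_affine_diff_root :: "real \<Rightarrow> real \<Rightarrow> real \<Rightarrow> real \<Rightarrow> real" where
  "exp_affine_diff_root a1 s1 a2 s2 = (a2 - a1) / (s1 - s2)"

definition exp_affine_diff_crit :: "real \<Rightarrow> real \<Rightarrow> real \<Rightarrow> real \<Rightarrow> real" where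
  "exp_affine_diff_crit a1 s1 a2 s2 = (ln (s1 / s2) + a1 - a2) / (s2 - s1)"

lemma exp_affine_diff_root_swap: "exp_affine_diff_root a2 s2 a1 s1 = exp_affine_diff_root a1 s1 a2 s2"
  unfolding exp_affine_diff_root_def by (metis minus_diff_eq minus_divide_divide)

lemma exp_affine_diff_crit_swap:
  assumes "0 < s1" "0 < s2"
  shows "exp_affine_diff_crit a2 s2 a1 s1 = exp_affine_diff_crit a1 s1 a2 s2"
proof -
  have "ln (s2 / s1) + a2 - a1 = - (ln (s1 / s2) + a1 - a2)"
    using assms by (simp add: ln_div)
  then show ?thesis
    unfolding exp_affine_diff_crit_def by (metis minus_diff_eq minus_divide_divide)
qed

lemma exp_affine_diff_same_slope: "exp_affine_diff a1 s a2 s y = (exp a1 - exp a2) * exp (s * y)"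
  by (simp add: exp_affine_diff_def exp_add left_diff_distrib)

lemma exp_affine_diff_le_0_iff:
  assumes "s2 < s1"
  shows "exp_affine_diff a1 s1 a2 s2 y \<le> 0 \<longleftrightarrow> y \<le> exp_affine_diff_root a1 s1 a2 s2"
proof -
  have "exp_affine_diff a1 s1 a2 s2 y \<le> 0 \<longleftrightarrow> y * (s1 - s2) \<le> a2 - a1"
    by (simp add: exp_affine_diff_def algebra_simps)
  then show ?thesis
    using assms by (simp add: exp_affine_diff_root_def pos_le_divide_eq)
qed

lemma exp_affine_diff_less_0_iff:
  assumes "s2 < s1"
  shows "exp_affine_diff a1 s1 a2 s2 y < 0 \<longleftrightarrow> y < exp_affine_diff_root a1 s1 a2 s2"
proof -
  have "exp_affine_diff a1 s1 a2 s2 y < 0 \<longleftrightarrow> y * (s1 - s2) < a2 - a1"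
    by (simp add: exp_affine_diff_def algebra_simps)
  then show ?thesis
    using assms by (simp add: exp_affine_diff_root_def pos_less_divide_eq)
qed

lemma has_real_derivative_exp_affine_diff:
  assumes "0 < s1" "0 < s2"
  shows "(exp_affine_diff a1 s1 a2 s2 has_real_derivative
          exp_affine_diff (a1 + ln s1) s1 (a2 + ln s2) s2 y) (at y)"
proof -
  have "(exp_affine_diff a1 s1 a2 s2 has_real_derivative
          s1 * exp (a1 + s1 * y) - s2 * exp (a2 + s2 * y)) (at y)"
    unfolding exp_affine_diff_def[abs_def] by (auto intro!: derivative_eq_intros)
  then show ?thesis
    using assms by (simp add: exp_affine_diff_def exp_add algebra_simps)
qed

lemma exp_affine_diff_root_deriv:
  assumes "0 < s1" "0 < s2"
  shows "exp_affine_diff_root (a1 + ln s1) s1 (a2 + ln s2) s2 = exp_affine_diff_crit a1 s1 a2 s2"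
proof -
  have "a2 + ln s2 - (a1 + ln s1) = - (ln (s1 / s2) + a1 - a2)"
    using assms by (simp add: ln_div)
  then show ?thesis
    unfolding exp_affine_diff_root_def exp_affine_diff_crit_def
    by (metis minus_diff_eq minus_divide_divide)
qed

lemma
  assumes "0 < s2" "s2 < s1"
  shows mono_on_exp_affine_diff:
      "mono_on {exp_affine_diff_crit a1 s1 a2 s2..} (exp_affine_diff a1 s1 a2 s2)"
    and antimono_on_exp_affine_diff:
      "antimono_on {..exp_affine_diff_crit a1 s1 a2 s2} (exp_affine_diff a1 s1 a2 s2)"
proof -
  let ?c = "exp_affine_diff_crit a1 s1 a2 s2"
    and ?g' = "exp_affine_diff (a1 + ln s1) s1 (a2 + ln s2) s2"
  have deriv: "(exp_affine_diff a1 s1 a2 s2 has_real_derivative ?g' y) (at y)" for y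
    using assms by (intro has_real_derivative_exp_affine_diff) auto
  have nonpos: "?g' y \<le> 0 \<longleftrightarrow> y \<le> ?c" and neg: "?g' y < 0 \<longleftrightarrow> y < ?c" for y
    using assms by (simp_all add: exp_affine_diff_le_0_iff exp_affine_diff_less_0_iff
        exp_affine_diff_root_deriv)
  show "mono_on {?c..} (exp_affine_diff a1 s1 a2 s2)"
  proof (rule mono_onI)
    fix r s assume r: "r \<in> {?c..}" and "r \<le> s"
    show "exp_affine_diff a1 s1 a2 s2 r \<le> exp_affine_diff a1 s1 a2 s2 s"
    proof (rule DERIV_nonneg_imp_nondecreasing[OF \<open>r \<le> s\<close>])
      fix x assume "r \<le> x"
      with r have "0 \<le> ?g' x"
        using neg[of x] by simp
      then show "\<exists>d. (exp_affine_diff a1 s1 a2 s2 has_real_derivative d) (at x) \<and> d \<ge> 0"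
        using deriv by blast
    qed
  qed
  show "antimono_on {..?c} (exp_affine_diff a1 s1 a2 s2)"
  proof (rule monotone_onI)
    fix r s assume s: "s \<in> {..?c}" and "r \<le> s"
    show "exp_affine_diff a1 s1 a2 s2 r \<ge> exp_affine_diff a1 s1 a2 s2 s"
    proof (rule DERIV_nonpos_imp_nonincreasing[OF \<open>r \<le> s\<close>])
      fix x assume "x \<le> s"
      with s have "?g' x \<le> 0"
        using nonpos[of x] by simp
      then show "\<exists>d. (exp_affine_diff a1 s1 a2 s2 has_real_derivative d) (at x) \<and> d \<le> 0"
        using deriv by blast
    qed
  qed
qed

lemma exp_affine_diff_crit_less_root:
  assumes "0 < s2" "s2 < s1"
  shows "exp_affine_diff_crit a1 s1 a2 s2 < exp_affine_diff_root a1 s1 a2 s2"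
proof -
  have "(a2 + ln s2 - (a1 + ln s1)) / (s1 - s2) < (a2 - a1) / (s1 - s2)"
    using assms by (intro divide_strict_right_mono) auto
  then show ?thesis
    using exp_affine_diff_root_deriv[of s1 s2 a1 a2] assms
    by (simp add: exp_affine_diff_root_def)
qed

lemma exp_affine_diff_crit_le:
  assumes "0 < s2" "s2 < s1"
  shows "exp_affine_diff a1 s1 a2 s2 (exp_affine_diff_crit a1 s1 a2 s2) \<le> exp_affine_diff a1 s1 a2 s2 y"
  using mono_onD[OF mono_on_exp_affine_diff[OF assms]]
    monotone_onD[OF antimono_on_exp_affine_diff[OF assms]]
  by (cases "exp_affine_diff_crit a1 s1 a2 s2 \<le> y") auto

lemma exp_affine_diff_crit_neg:
  assumes "0 < s2" "s2 < s1"
  shows "exp_affine_diff a1 s1 a2 s2 (exp_affine_diff_crit a1 s1 a2 s2) < 0"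
  using assms by (simp add: exp_affine_diff_less_0_iff exp_affine_diff_crit_less_root)

lemma tendsto_exp_affine_diff_at_bot:
  assumes "0 < s1" "0 < s2"
  shows "(exp_affine_diff a1 s1 a2 s2 \<longlongrightarrow> 0) at_bot"
proof -
  have "((\<lambda>y. exp (a + s * y)) \<longlongrightarrow> 0) at_bot" if "0 < s" for a s :: real
    using that by real_asymp
  from tendsto_diff[OF this[OF assms(1)] this[OF assms(2)]] show ?thesis
    by (simp add: exp_affine_diff_def[abs_def])
qed

lemma filterlim_exp_affine_diff_at_top:
  assumes "0 < s2" "s2 < s1"
  shows "filterlim (exp_affine_diff a1 s1 a2 s2) at_top at_top"
  unfolding exp_affine_diff_def[abs_def] using assms by real_asymp

lemma exp_affine_diff_nondec_tail_iff:
  assumes "0 < s2" "s2 < s1"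
  shows "(\<forall>y<y'. exp_affine_diff a1 s1 a2 s2 y \<le> exp_affine_diff a1 s1 a2 s2 y') \<and>
           mono_on {y'..} (exp_affine_diff a1 s1 a2 s2)
         \<longleftrightarrow> exp_affine_diff_root a1 s1 a2 s2 \<le> y'"
    (is "(\<forall>y<y'. ?g y \<le> ?g y') \<and> _ \<longleftrightarrow> ?r \<le> y'")
proof
  assume tail: "(\<forall>y<y'. ?g y \<le> ?g y') \<and> mono_on {y'..} ?g"
  show "?r \<le> y'"
  proof (rule ccontr)
    assume "\<not> ?r \<le> y'"
    then have "?g y' < 0"
      using assms by (simp add: exp_affine_diff_less_0_iff)
    then have "eventually (\<lambda>y. ?g y' < ?g y \<and> y < y') at_bot"
      using assms order_tendstoD(1)[OF tendsto_exp_affine_diff_at_bot]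
      by (intro eventually_conj) (auto simp: eventually_at_bot_dense)
    then obtain y where "?g y' < ?g y" "y < y'"
      by (auto simp: eventually_at_bot_linorder)
    with tail show False
      by fastforce
  qed
next
  let ?c = "exp_affine_diff_crit a1 s1 a2 s2"
  assume "?r \<le> y'"
  moreover have "?c < ?r"
    using assms by (rule exp_affine_diff_crit_less_root)
  ultimately have mono: "mono_on {y'..} ?g"
    by (intro mono_on_subset[OF mono_on_exp_affine_diff[OF assms]]) auto
  have "?g y \<le> ?g y'" if "y < y'" for y
  proof (cases "y < ?r")
    case True
    then have "?g y < 0" "\<not> ?g y' < 0"
      using assms \<open>?r \<le> y'\<close> by (simp_all add: exp_affine_diff_less_0_iff)
    then show ?thesis
      by linarith
  next
    case False
    then show ?thesis
      using \<open>?c < ?r\<close> \<open>y < y'\<close> mono_onD[OF mono_on_exp_affine_diff[OF assms]] by simp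
  qed
  with mono show "(\<forall>y<y'. ?g y \<le> ?g y') \<and> mono_on {y'..} ?g"
    by blast
qed

lemma INF_ereal_eq_limit:
  fixes g :: "'a \<Rightarrow> real"
  assumes "\<And>x. l \<le> g x" and "(g \<longlongrightarrow> l) F" and "F \<noteq> bot"
  shows "(INF x. ereal (g x)) = ereal l"
proof (rule antisym)
  show "(INF x. ereal (g x)) \<le> ereal l"
    by (rule tendsto_lowerbound[OF tendsto_ereal[OF assms(2)] _ assms(3)])
      (auto intro!: always_eventually INF_lower)
  show "ereal l \<le> (INF x. ereal (g x))"
    by (rule INF_greatest) (simp add: assms(1))
qed

lemma SUP_ereal_eq_PInfty:
  fixes g :: "'a \<Rightarrow> real"
  assumes "filterlim g at_top F" and "F \<noteq> bot"
  shows "(SUP x. ereal (g x)) = \<infinity>"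
proof -
  have "\<infinity> \<le> (SUP x. ereal (g x))"
    using assms(1) unfolding tendsto_PInfty_eq_at_top[symmetric]
    by (rule tendsto_upperbound) (auto intro!: always_eventually SUP_upper assms(2))
  then show ?thesis
    by simp
qed

lemma SUP_ereal_eq_uminus_INF: "(SUP x\<in>A. ereal (g x)) = - (INF x\<in>A. ereal (- g x))"
  using ereal_INF_uminus_eq[of "\<lambda>x. ereal (g x)" A] by simp

lemma INF_ereal_eq_uminus_SUP: "(INF x\<in>A. ereal (g x)) = - (SUP x\<in>A. ereal (- g x))"
  using ereal_SUP_uminus_eq[of "\<lambda>x. ereal (g x)" A] by simp

lemma antimono_on_iff_mono_on_uminus:
  fixes h :: "'a::order \<Rightarrow> 'b::ordered_ab_group_add"
  shows "antimono_on A h \<longleftrightarrow> mono_on A (\<lambda>x. - h x)"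
  by (auto simp: monotone_on_def)

lemma mono_on_range_if_mono_comp:
  fixes F :: "'a::linorder \<Rightarrow> 'b::linorder"
  assumes "strict_mono F" and "mono (\<lambda>y. h (F y))"
  shows "mono_on (range F) h"
  using assms(2) by (auto intro!: mono_onI simp: strict_mono_less_eq[OF assms(1)] dest: monoD)

lemma nondec_tail_at_comp_iff:
  fixes F :: "'a::linorder \<Rightarrow> real"
  assumes "strict_mono F" and "range F = {0<..<1}"
  shows "nondec_tail_at h (F y') \<longleftrightarrow>
           (\<forall>y<y'. h (F y) \<le> h (F y')) \<and> mono_on {y'..} (\<lambda>y. h (F y))"
  unfolding nondec_tail_at_def mono_on_def assms(2)[symmetric]
  by (auto simp: strict_mono_less[OF assms(1)] strict_mono_less_eq[OF assms(1)])

lemma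
  shows has_noninc_upper_tail_iff_uminus:
      "has_noninc_upper_tail h \<longleftrightarrow> has_nondec_upper_tail (\<lambda>u. - h u)"
    and noninc_tail_threshold_eq_uminus:
      "noninc_tail_threshold h = nondec_tail_threshold (\<lambda>u. - h u)"
proof -
  have "noninc_tail_at h = nondec_tail_at (\<lambda>u. - h u)"
    by (auto simp: fun_eq_iff noninc_tail_at_def nondec_tail_at_def)
  then show "has_noninc_upper_tail h \<longleftrightarrow> has_nondec_upper_tail (\<lambda>u. - h u)"
    and "noninc_tail_threshold h = nondec_tail_threshold (\<lambda>u. - h u)"
    by (simp_all add: has_noninc_upper_tail_def has_nondec_upper_tail_def
        noninc_tail_threshold_def nondec_tail_threshold_def)
qed

lemma reparam_exp_affine_diff_equal_slopes:
  fixes F h :: "real \<Rightarrow> real"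
  assumes F: "strict_mono F" "range F = {0<..<1}"
    and hF: "\<And>y. h (F y) = exp_affine_diff a1 s a2 s y"
    and "0 < s" "a2 < a1"
  shows "(INF u\<in>{0<..<1}. ereal (h u)) = 0"
    and "(SUP u\<in>{0<..<1}. ereal (h u)) = \<infinity>"
    and "mono_on {0<..<1} h"
proof -
  define c where "c = exp a1 - exp a2"
  have "0 < c"
    using \<open>a2 < a1\<close> by (simp add: c_def)
  have g: "h (F y) = c * exp (s * y)" for y
    by (simp add: hF c_def exp_affine_diff_same_slope)
  have "((\<lambda>y. c * exp (s * y)) \<longlongrightarrow> 0) at_bot"
    using \<open>0 < s\<close> by real_asymp
  then have "(INF y. ereal (h (F y))) = ereal 0"
    using \<open>0 < c\<close> by (intro INF_ereal_eq_limit[where F = at_bot]) (simp_all add: g)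
  then show "(INF u\<in>{0<..<1}. ereal (h u)) = 0"
    by (simp add: F(2)[symmetric] image_comp zero_ereal_def)
  have "filterlim (\<lambda>y. c * exp (s * y)) at_top at_top"
    using \<open>0 < c\<close> \<open>0 < s\<close> by real_asymp
  then have "(SUP y. ereal (h (F y))) = \<infinity>"
    by (intro SUP_ereal_eq_PInfty[where F = at_top]) (simp_all add: g)
  then show "(SUP u\<in>{0<..<1}. ereal (h u)) = \<infinity>"
    by (simp add: F(2)[symmetric] image_comp)
  have "mono (\<lambda>y. h (F y))"
    using \<open>0 < c\<close> \<open>0 < s\<close> by (intro monoI) (simp add: g)
  then show "mono_on {0<..<1} h"
    using mono_on_range_if_mono_comp[OF F(1)] by (simp add: F(2))
qed

lemma reparam_exp_affine_diff_steeper: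
  fixes F h :: "real \<Rightarrow> real"
  assumes F: "strict_mono F" "range F = {0<..<1}"
    and hF: "\<And>y. h (F y) = exp_affine_diff a1 s1 a2 s2 y"
    and s: "0 < s2" "s2 < s1"
  shows "(INF u\<in>{0<..<1}. ereal (h u)) = ereal (h (F (exp_affine_diff_crit a1 s1 a2 s2)))"
    and "h (F (exp_affine_diff_crit a1 s1 a2 s2)) < 0"
    and "(SUP u\<in>{0<..<1}. ereal (h u)) = \<infinity>"
    and "has_nondec_upper_tail h"
    and "nondec_tail_threshold h = F (exp_affine_diff_root a1 s1 a2 s2)"
proof -
  let ?g = "exp_affine_diff a1 s1 a2 s2"
    and ?c = "exp_affine_diff_crit a1 s1 a2 s2" and ?r = "exp_affine_diff_root a1 s1 a2 s2"
  have "(INF y. ereal (?g y)) = ereal (?g ?c)"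
    using exp_affine_diff_crit_le[OF s] by (intro antisym INF_greatest) (auto intro: INF_lower2)
  then show "(INF u\<in>{0<..<1}. ereal (h u)) = ereal (h (F ?c))"
    by (simp add: F(2)[symmetric] image_comp hF)
  show "h (F ?c) < 0"
    using exp_affine_diff_crit_neg[OF s] by (simp add: hF)
  have "(SUP y. ereal (?g y)) = \<infinity>"
    using filterlim_exp_affine_diff_at_top[OF s] by (rule SUP_ereal_eq_PInfty) simp
  then show "(SUP u\<in>{0<..<1}. ereal (h u)) = \<infinity>"
    by (simp add: F(2)[symmetric] image_comp hF)
  have tail_F: "nondec_tail_at h (F y') \<longleftrightarrow> ?r \<le> y'" for y'
    using nondec_tail_at_comp_iff[OF F] exp_affine_diff_nondec_tail_iff[OF s] by (simp add: hF)
  have "x' \<in> range F" if "nondec_tail_at h x'" for x'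
    using that by (simp add: nondec_tail_at_def F(2))
  with tail_F have tails: "{x'. nondec_tail_at h x'} = F ` {?r..}"
    by fastforce
  show "has_nondec_upper_tail h"
    unfolding has_nondec_upper_tail_def using tail_F by blast
  show "nondec_tail_threshold h = F ?r"
    unfolding nondec_tail_threshold_def tails
    by (rule cInf_eq_minimum) (auto simp: strict_mono_less_eq[OF F(1)])
qed

theorem proposition6p1:
  fixes M :: "'a measure" and W :: "'a \<Rightarrow> real" and f :: "real \<Rightarrow> real"
    and \<mu>1 \<mu>2 \<sigma>1 \<sigma>2 :: real
  assumes "prob_space M"
    and dens: "distributed M lborel W (\<lambda>x. ennreal (f x))"
    and fpos: "\<And>x. f x > 0"
    and "integrable M W"
    and "prob_space.expectation M W = 0"
    and "prob_space.variance M W = 1"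
    and "\<sigma>1 > 0" and "\<sigma>2 > 0"
    and "\<not> (\<mu>1 = \<mu>2 \<and> \<sigma>1 = \<sigma>2)"
  defines "F \<equiv> cdf (distr M borel W)"
  defines "h \<equiv> (\<lambda>u. exp (\<mu>1 + \<sigma>1 * quantile F u) - exp (\<mu>2 + \<sigma>2 * quantile F u))"
  defines "ymin \<equiv> (INF u\<in>{0<..<1::real}. ereal (h u))"
  defines "ymax \<equiv> (SUP u\<in>{0<..<1::real}. ereal (h u))"
  defines "cstar \<equiv> F ((\<mu>2 - \<mu>1) / (\<sigma>1 - \<sigma>2))"
  defines "ustar \<equiv> F ((ln (\<sigma>1 / \<sigma>2) + \<mu>1 - \<mu>2) / (\<sigma>2 - \<sigma>1))"
  defines "ystar \<equiv> h ustar"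
  shows "(\<sigma>1 = \<sigma>2 \<and> \<mu>1 > \<mu>2 \<longrightarrow>
            ymin = 0 \<and> ymax = \<infinity> \<and> mono_on {0<..<1} h)
       \<and> (\<sigma>1 = \<sigma>2 \<and> \<mu>2 > \<mu>1 \<longrightarrow>
            ymin = -\<infinity> \<and> ymax = 0 \<and> antimono_on {0<..<1} h)
       \<and> (\<sigma>1 > \<sigma>2 \<longrightarrow>
            ymin = ereal ystar \<and> ystar < 0 \<and> ymax = \<infinity> \<and>
            has_nondec_upper_tail h \<and> nondec_tail_threshold h = cstar)
       \<and> (\<sigma>1 < \<sigma>2 \<longrightarrow>
            ymin = -\<infinity> \<and> ymax = ereal ystar \<and> ystar > 0 \<and>
            has_noninc_upper_tail h \<and> noninc_tail_threshold h = cstar)"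
proof -
  have F: "strict_mono F" "range F = {0<..<1}"
    using cdf_distributed_pos_density[OF \<open>prob_space M\<close> dens fpos] by (simp_all add: F_def)
  have hF: "h (F y) = exp_affine_diff \<mu>1 \<sigma>1 \<mu>2 \<sigma>2 y" for y
    unfolding h_def quantile_strict_mono[OF F(1)] exp_affine_diff_def ..
  have neg_hF: "- h (F y) = exp_affine_diff \<mu>2 \<sigma>2 \<mu>1 \<sigma>1 y" for y
    by (simp add: hF exp_affine_diff_def)
  have ymax_neg: "ymax = - (INF u\<in>{0<..<1}. ereal (- h u))"
    and ymin_neg: "ymin = - (SUP u\<in>{0<..<1}. ereal (- h u))"
    unfolding ymin_def ymax_def by (rule SUP_ereal_eq_uminus_INF, rule INF_ereal_eq_uminus_SUP)
  have cstar: "cstar = F (exp_affine_diff_root \<mu>1 \<sigma>1 \<mu>2 \<sigma>2)"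
    and ystar: "ystar = h (F (exp_affine_diff_crit \<mu>1 \<sigma>1 \<mu>2 \<sigma>2))"
    by (simp_all add: cstar_def ystar_def ustar_def exp_affine_diff_root_def exp_affine_diff_crit_def)
  note equal = reparam_exp_affine_diff_equal_slopes[OF F]
  note steeper = reparam_exp_affine_diff_steeper[OF F]
  have "ymin = 0 \<and> ymax = \<infinity> \<and> mono_on {0<..<1} h" if "\<sigma>1 = \<sigma>2" "\<mu>1 > \<mu>2"
    using equal[of h \<mu>1 \<sigma>1 \<mu>2] hF that \<open>\<sigma>1 > 0\<close> by (simp add: ymin_def ymax_def)
  moreover have "ymin = -\<infinity> \<and> ymax = 0 \<and> antimono_on {0<..<1} h" if "\<sigma>1 = \<sigma>2" "\<mu>2 > \<mu>1"
    using equal[of "\<lambda>u. - h u" \<mu>2 \<sigma>2 \<mu>1] neg_hF that \<open>\<sigma>2 > 0\<close>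
    by (simp add: ymin_neg ymax_neg antimono_on_iff_mono_on_uminus)
  moreover have "ymin = ereal ystar \<and> ystar < 0 \<and> ymax = \<infinity> \<and>
      has_nondec_upper_tail h \<and> nondec_tail_threshold h = cstar" if "\<sigma>1 > \<sigma>2"
    using steeper[OF hF \<open>\<sigma>2 > 0\<close> that] by (simp add: ymin_def ymax_def cstar ystar)
  moreover have "ymin = -\<infinity> \<and> ymax = ereal ystar \<and> ystar > 0 \<and>
      has_noninc_upper_tail h \<and> noninc_tail_threshold h = cstar" if "\<sigma>1 < \<sigma>2"
    using steeper[of "\<lambda>u. - h u", OF neg_hF \<open>\<sigma>1 > 0\<close> that] \<open>\<sigma>1 > 0\<close> \<open>\<sigma>2 > 0\<close>
    by (simp add: ymin_neg ymax_neg cstar ystar has_noninc_upper_tail_iff_uminus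
        noninc_tail_threshold_eq_uminus exp_affine_diff_crit_swap exp_affine_diff_root_swap)
  ultimately show ?thesis
    by blast
qed

end
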